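(* Let $K$ be an idempotent ordered TGP-$\omega$-valuation monoid, $AP$ a finite set of atomic propositions, $k\in K\setminus\{\mathbf{0},\mathbf{1}\}$ and $\varphi\in k\text{-}t\text{-}RULTL(K,AP)$. Then $\|\varphi\|:(\mathcal{P}(AP))^{\omega}\to K$ is $k$-safe.
   Context: Idempotent ordered TGP-$\omega$-valuation monoid $(K,+,\cdot,Val^{\omega},\mathbf{0},\mathbf{1})$: complete monoid $(K,+,\mathbf{0})$ (infinitary sums over arbitrary index sets with the usual axioms), idempotent, totally ordered by the natural order $k\le k'$ iff $k'=k'+k$; $Val^{\omega}$ maps finitely-valued sequences in $K$ to $K$; $\cdot$ has zero $\mathbf{0}$ and unit $\mathbf{1}$; $Val^{\omega}=\mathbf{0}$ if some entry is $\mathbf{0}$; $Val^{\omega}(\mathbf{1}^{\omega})=\mathbf{1}$; $\sum_I(k\cdot\mathbf{1})=k\cdot\sum_I\mathbf{1}$; $Val^{\omega}((\sum_{i_j\in I_j}k_{i_j})_j)=\sum_{(i_j)_j\in\prod_j I_j}Val^{\omega}((k_{i_j})_j)$ for finite $I_j$, $k_{i_j}$ in a finite $L\subseteq K$ with each family entirely in $L\setminus\{\mathbf{0},\mathbf{1}\}$ or entirely in $\{\mathbf{0},\mathbf{1}\}$; moreover $Val^{\omega}(\mathbf{1},k_1,\dots)=Val^{\omega}(k_1,\dots)$, $Val^{\omega}(k,\mathbf{1},\mathbf{1},\dots)=k$, $k\le\mathbf{1}$, and $k_i\ge k\ \forall i\Rightarrow Val^{\omega}((k_i)_i)\ge k$.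 Weighted LTL over $AP$ and $K$: $\varphi::=k\mid a\mid\neg a\mid\varphi\vee\varphi\mid\varphi\wedge\varphi\mid\bigcirc\varphi\mid\varphi U\varphi\mid\square\varphi$, with semantics: $(\|k\|,w)=k$; $(\|a\|,w)=\mathbf{1}$ if $a\in w(0)$ else $\mathbf{0}$; $\neg a$ dually; $\vee\mapsto+$, $\wedge\mapsto\cdot$ pointwise; $(\|\bigcirc\varphi\|,w)=(\|\varphi\|,w_{\ge1})$; $(\|\varphi U\psi\|,w)=\sum_{i\ge0}Val^{\omega}((\|\varphi\|,w_{\ge0}),\dots,(\|\varphi\|,w_{\ge i-1}),(\|\psi\|,w_{\ge i}),\mathbf{1},\mathbf{1},\dots)$; $(\|\square\varphi\|,w)=Val^{\omega}(((\|\varphi\|,w_{\ge i}))_{i\ge0})$. $true:=\mathbf{1}$, $\varphi\tilde U\psi:=\square\varphi\vee(\varphi U\psi)$. $sbLTL(K,AP)$: $\varphi::=true\mid a\mid\neg a\mid\varphi\vee\varphi\mid\varphi\wedge\varphi\mid\bigcirc\varphi\mid\varphi\tilde U\varphi\mid\square\varphi$. $L_k=\{k'\in K\mid k'\ge k\}$. $k\text{-}stLTL(K,AP)$: formulas $\bigvee_{1\le i\le n}(k_i\wedge\varphi_i)$, $k_i\in L_k\setminus\{\mathbf{0},\mathbf{1}\}$, $\varphi_i\in sbLTL(K,AP)$. $k\text{-}t\text{-}RULTL(K,AP)$ is the least class of formulas such that: (1) every $k'\in L_k$ is in it; (2) $sbLTL(K,AP)\subseteq$ it; (3) $k\text{-}stLTL(K,AP)\subseteq$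 it; (4) closed under $\bigcirc$; (5) closed under $\vee$; (6) if $\varphi\in sbLTL(K,AP)$ and $\psi\in k\text{-}stLTL(K,AP)$, or $\psi=\xi\tilde U\lambda$, or $\psi=\square\xi$ with $\xi,\lambda\in k\text{-}stLTL(K,AP)$, then $\varphi\wedge\psi,\psi\wedge\varphi$ are in it; (7) if $\varphi,\psi\in k\text{-}stLTL(K,AP)$ then $\varphi\tilde U\psi$ is in it; (8) if $\varphi\in k\text{-}stLTL(K,AP)$ then $\square\varphi$ is in it. A series $s$ is $k$-safe if for every $w$: whenever for every $i>0$ there is $u$ with $(s,w_{<i}u)\ge k$ ($w_{<i}$ the length-$i$ prefix), then $(s,w)\ge k$. *)

theory Defs
  imports Main
begin

text \<open>Infinitary sums are indexed by subsets of the fixed index type nat => nat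
  (this contains nat and all products of subsets of nat, which is what the
  semantics and the distributivity axiom need).\<close>

type_synonym idx = "nat \<Rightarrow> nat"

record 'k vmon =
  vplus :: "'k \<Rightarrow> 'k \<Rightarrow> 'k"
  vzero :: 'k
  vsum  :: "(idx \<Rightarrow> 'k) \<Rightarrow> idx set \<Rightarrow> 'k"
  vmult :: "'k \<Rightarrow> 'k \<Rightarrow> 'k"
  vone  :: 'k
  vval  :: "(nat \<Rightarrow> 'k) \<Rightarrow> 'k"

definition vle :: "'k vmon \<Rightarrow> 'k \<Rightarrow> 'k \<Rightarrow> bool" where
  "vle K a b \<longleftrightarrow> b = vplus K b a"

definition nsum :: "'k vmon \<Rightarrow> (nat \<Rightarrow> 'k) \<Rightarrow> nat set \<Rightarrow> 'k" where
  "nsum K f A = vsum K (\<lambda>x. f (x 0)) ((\<lambda>n. \<lambda>_::nat. n) ` A)"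

definition complete_monoid :: "'k vmon \<Rightarrow> bool" where
  "complete_monoid K \<longleftrightarrow>
     (\<forall>a b c. vplus K (vplus K a b) c = vplus K a (vplus K b c)) \<and>
     (\<forall>a b. vplus K a b = vplus K b a) \<and>
     (\<forall>a. vplus K a (vzero K) = a) \<and>
     (\<forall>f. vsum K f {} = vzero K) \<and>
     (\<forall>f x. vsum K f {x} = f x) \<and>
     (\<forall>f x y. x \<noteq> y \<longrightarrow> vsum K f {x, y} = vplus K (f x) (f y)) \<and>
     (\<forall>f g I. (\<forall>x\<in>I. f x = g x) \<longrightarrow> vsum K f I = vsum K g I) \<and>
     (\<forall>f (J :: idx set) (P :: idx \<Rightarrow> idx set).
        (\<forall>i\<in>J. \<forall>j\<in>J. i \<noteq> j \<longrightarrow> P i \<inter> P j = {}) \<longrightarrow>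
        vsum K (\<lambda>j. vsum K f (P j)) J = vsum K f (\<Union>j\<in>J. P j))"

definition fin_valued :: "(nat \<Rightarrow> 'k) \<Rightarrow> bool" where
  "fin_valued s \<longleftrightarrow> finite (range s)"

definition idem_ordered_tgp :: "'k vmon \<Rightarrow> bool" where
  "idem_ordered_tgp K \<longleftrightarrow>
     complete_monoid K \<and>
     (\<forall>a. vplus K a a = a) \<and>
     (\<forall>a b. vle K a b \<or> vle K b a) \<and>
     (\<forall>a. vmult K (vzero K) a = vzero K \<and> vmult K a (vzero K) = vzero K) \<and>
     (\<forall>a. vmult K (vone K) a = a \<and> vmult K a (vone K) = a) \<and>
     (\<forall>s. fin_valued s \<and> (\<exists>i. s i = vzero K) \<longrightarrow> vval K s = vzero K) \<and>
     vval K (\<lambda>_. vone K) = vone K \<and>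
     (\<forall>c I. vsum K (\<lambda>_. vmult K c (vone K)) I = vmult K c (vsum K (\<lambda>_. vone K) I)) \<and>
     (\<forall>(I :: nat \<Rightarrow> nat set) (kk :: nat \<Rightarrow> nat \<Rightarrow> 'k) (L :: 'k set).
        finite L \<and> (\<forall>j. finite (I j)) \<and> (\<forall>j. \<forall>i\<in>I j. kk j i \<in> L) \<and>
        (\<forall>j. (\<forall>i\<in>I j. kk j i \<notin> {vzero K, vone K}) \<or> (\<forall>i\<in>I j. kk j i \<in> {vzero K, vone K}))
        \<longrightarrow> vval K (\<lambda>j. nsum K (kk j) (I j))
            = vsum K (\<lambda>x. vval K (\<lambda>j. kk j (x j))) {x. \<forall>j. x j \<in> I j}) \<and>
     (\<forall>s. fin_valued s \<longrightarrow> vval K (\<lambda>n. if n = 0 then vone K else s (n - 1)) = vval K s) \<and>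
     (\<forall>c. vval K (\<lambda>n. if n = 0 then c else vone K) = c) \<and>
     (\<forall>c. vle K c (vone K)) \<and>
     (\<forall>s c. fin_valued s \<and> (\<forall>i. vle K c (s i)) \<longrightarrow> vle K c (vval K s))"

datatype ('k, 'a) ltl =
    Const 'k | Atom 'a | NAtom 'a
  | Or "('k, 'a) ltl" "('k, 'a) ltl" | And "('k, 'a) ltl" "('k, 'a) ltl"
  | Next "('k, 'a) ltl" | Until "('k, 'a) ltl" "('k, 'a) ltl" | Box "('k, 'a) ltl"

definition sfx :: "nat \<Rightarrow> (nat \<Rightarrow> 'b) \<Rightarrow> (nat \<Rightarrow> 'b)" where
  "sfx i w = (\<lambda>n. w (n + i))"

primrec sem :: "'k vmon \<Rightarrow> ('k, 'a) ltl \<Rightarrow> (nat \<Rightarrow> 'a set) \<Rightarrow> 'k" where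
  "sem K (Const c) w = c"
| "sem K (Atom a) w = (if a \<in> w 0 then vone K else vzero K)"
| "sem K (NAtom a) w = (if a \<in> w 0 then vzero K else vone K)"
| "sem K (Or \<phi> \<psi>) w = vplus K (sem K \<phi> w) (sem K \<psi> w)"
| "sem K (And \<phi> \<psi>) w = vmult K (sem K \<phi> w) (sem K \<psi> w)"
| "sem K (Next \<phi>) w = sem K \<phi> (sfx 1 w)"
| "sem K (Until \<phi> \<psi>) w =
     nsum K (\<lambda>i. vval K (\<lambda>n. if n < i then sem K \<phi> (sfx n w)
                              else if n = i then sem K \<psi> (sfx i w) else vone K)) UNIV"
| "sem K (Box \<phi>) w = vval K (\<lambda>i. sem K \<phi> (sfx i w))"

definition ltrue :: "'k vmon \<Rightarrow> ('k, 'a) ltl" where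
  "ltrue K = Const (vone K)"

definition rU :: "('k, 'a) ltl \<Rightarrow> ('k, 'a) ltl \<Rightarrow> ('k, 'a) ltl" where
  "rU \<phi> \<psi> = Or (Box \<phi>) (Until \<phi> \<psi>)"

inductive_set sbLTL :: "'k vmon \<Rightarrow> 'a set \<Rightarrow> ('k, 'a) ltl set" for K AP where
  sb_true: "ltrue K \<in> sbLTL K AP"
| sb_atom: "a \<in> AP \<Longrightarrow> Atom a \<in> sbLTL K AP"
| sb_natom: "a \<in> AP \<Longrightarrow> NAtom a \<in> sbLTL K AP"
| sb_or: "\<phi> \<in> sbLTL K AP \<Longrightarrow> \<psi> \<in> sbLTL K AP \<Longrightarrow> Or \<phi> \<psi> \<in> sbLTL K AP"
| sb_and: "\<phi> \<in> sbLTL K AP \<Longrightarrow> \<psi> \<in> sbLTL K AP \<Longrightarrow> And \<phi> \<psi> \<in> sbLTL K AP"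
| sb_next: "\<phi> \<in> sbLTL K AP \<Longrightarrow> Next \<phi> \<in> sbLTL K AP"
| sb_rU: "\<phi> \<in> sbLTL K AP \<Longrightarrow> \<psi> \<in> sbLTL K AP \<Longrightarrow> rU \<phi> \<psi> \<in> sbLTL K AP"
| sb_box: "\<phi> \<in> sbLTL K AP \<Longrightarrow> Box \<phi> \<in> sbLTL K AP"

definition Lk :: "'k vmon \<Rightarrow> 'k \<Rightarrow> 'k set" where
  "Lk K k = {k'. vle K k k'}"

text \<open>k-stLTL: finite nonempty disjunctions (any bracketing) of k_i \<and> \<phi>_i\<close>
inductive_set stLTL :: "'k vmon \<Rightarrow> 'a set \<Rightarrow> 'k \<Rightarrow> ('k, 'a) ltl set" for K AP k where
  st_base: "c \<in> Lk K k - {vzero K, vone K} \<Longrightarrow> \<phi> \<in> sbLTL K AP \<Longrightarrow> And (Const c) \<phi> \<in> stLTL K AP k"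
| st_or: "\<phi> \<in> stLTL K AP k \<Longrightarrow> \<psi> \<in> stLTL K AP k \<Longrightarrow> Or \<phi> \<psi> \<in> stLTL K AP k"

inductive_set tRULTL :: "'k vmon \<Rightarrow> 'a set \<Rightarrow> 'k \<Rightarrow> ('k, 'a) ltl set" for K AP k where
  t_const: "c \<in> Lk K k \<Longrightarrow> Const c \<in> tRULTL K AP k"
| t_sb: "\<phi> \<in> sbLTL K AP \<Longrightarrow> \<phi> \<in> tRULTL K AP k"
| t_st: "\<phi> \<in> stLTL K AP k \<Longrightarrow> \<phi> \<in> tRULTL K AP k"
| t_next: "\<phi> \<in> tRULTL K AP k \<Longrightarrow> Next \<phi> \<in> tRULTL K AP k"
| t_or: "\<phi> \<in> tRULTL K AP k \<Longrightarrow> \<psi> \<in> tRULTL K AP k \<Longrightarrow> Or \<phi> \<psi> \<in> tRULTL K AP k"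
| t_and1: "\<phi> \<in> sbLTL K AP \<Longrightarrow>
     \<psi> \<in> stLTL K AP k
     \<or> (\<exists>\<xi> \<zeta>. \<xi> \<in> stLTL K AP k \<and> \<zeta> \<in> stLTL K AP k \<and> \<psi> = rU \<xi> \<zeta>)
     \<or> (\<exists>\<xi>. \<xi> \<in> stLTL K AP k \<and> \<psi> = Box \<xi>) \<Longrightarrow> And \<phi> \<psi> \<in> tRULTL K AP k"
| t_and2: "\<phi> \<in> sbLTL K AP \<Longrightarrow>
     \<psi> \<in> stLTL K AP k
     \<or> (\<exists>\<xi> \<zeta>. \<xi> \<in> stLTL K AP k \<and> \<zeta> \<in> stLTL K AP k \<and> \<psi> = rU \<xi> \<zeta>)
     \<or> (\<exists>\<xi>. \<xi> \<in> stLTL K AP k \<and> \<psi> = Box \<xi>) \<Longrightarrow> And \<psi> \<phi> \<in> tRULTL K AP k"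
| t_rU: "\<phi> \<in> stLTL K AP k \<Longrightarrow> \<psi> \<in> stLTL K AP k \<Longrightarrow> rU \<phi> \<psi> \<in> tRULTL K AP k"
| t_box: "\<phi> \<in> stLTL K AP k \<Longrightarrow> Box \<phi> \<in> tRULTL K AP k"

definition conc :: "(nat \<Rightarrow> 'b) \<Rightarrow> nat \<Rightarrow> (nat \<Rightarrow> 'b) \<Rightarrow> (nat \<Rightarrow> 'b)" where
  "conc w i u = (\<lambda>n. if n < i then w n else u (n - i))"

definition k_safe :: "'k vmon \<Rightarrow> 'a set \<Rightarrow> 'k \<Rightarrow> ((nat \<Rightarrow> 'a set) \<Rightarrow> 'k) \<Rightarrow> bool" where
  "k_safe K AP k s \<longleftrightarrow>
     (\<forall>w. (\<forall>n. w n \<subseteq> AP) \<longrightarrow>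
        (\<forall>i>0. \<exists>u. (\<forall>n. u n \<subseteq> AP) \<and> vle K k (s (conc w i u))) \<longrightarrow>
        vle K k (s w))"

end

(*
  Fix k \<noteq> 0. An sbLTL formula only takes the weights 0 and 1, and a k-stLTL formula takes
  finitely many weights, each 0 or at least k. For finitely valued sequences with entries in
  {0} \<union> L_k, Val is at least k iff every entry is (one zero entry makes it 0), and a sum of
  such weights is at least k iff some summand is (the order is total and + is idempotent);
  multiplication by a 0/1 weight acts as a guard. Hence for every formula of k-t-RULTL the
  property "weight at least k" is built from first-letter tests by conjunction, disjunction,
  shifting, quantification over suffixes and weak until. Safety properties are closed under
  all of these: for disjunction and weak until one uses that a violated safety property has a
  bad prefix, and every longer prefix of the word is then bad as well.
*)

theory Submission
  imports Defs
begin

abbreviation word_over :: "'a set \<Rightarrow> (nat \<Rightarrow> 'a set) \<Rightarrow> bool" where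
  "word_over AP w \<equiv> \<forall>n. w n \<subseteq> AP"

definition safety :: "'a set \<Rightarrow> ((nat \<Rightarrow> 'a set) \<Rightarrow> bool) \<Rightarrow> bool" where
  "safety AP P \<longleftrightarrow>
     (\<forall>w. word_over AP w \<longrightarrow> (\<forall>i>0. \<exists>u. word_over AP u \<and> P (conc w i u)) \<longrightarrow> P w)"

lemma k_safe_iff_safety: "k_safe K AP k s \<longleftrightarrow> safety AP (\<lambda>w. vle K k (s w))"
  by (simp add: k_safe_def safety_def)

lemma conc_sfx_conc: "j \<le> i \<Longrightarrow> conc w j (sfx j (conc w i u)) = conc w i u"
  by (auto simp: conc_def sfx_def)

lemma sfx_conc_add: "sfx j (conc w (i + j) u) = conc (sfx j w) i u"
  by (auto simp: conc_def sfx_def)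

lemma word_over_conc: "word_over AP w \<Longrightarrow> word_over AP u \<Longrightarrow> word_over AP (conc w i u)"
  by (simp add: conc_def)

lemma word_over_sfx: "word_over AP w \<Longrightarrow> word_over AP (sfx j w)"
  by (simp add: sfx_def)

lemma safetyI:
  assumes "\<And>w. word_over AP w \<Longrightarrow> (\<And>i. i > 0 \<Longrightarrow> \<exists>u. word_over AP u \<and> P (conc w i u)) \<Longrightarrow> P w"
  shows "safety AP P"
  using assms unfolding safety_def by blast

lemma safetyD:
  assumes "safety AP P" "word_over AP w" "\<And>i. i > 0 \<Longrightarrow> \<exists>u. word_over AP u \<and> P (conc w i u)"
  shows "P w"
  using assms unfolding safety_def by blast

lemma safety_eventually_violated:
  assumes "safety AP P" "word_over AP w" "\<not> P w"
  shows "\<forall>\<^sub>F i in sequentially. \<forall>u. word_over AP u \<longrightarrow> \<not> P (conc w i u)"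
proof -
  obtain i where i: "\<forall>u. word_over AP u \<longrightarrow> \<not> P (conc w i u)"
    using safetyD[OF assms(1,2)] assms(3) by blast
  have "\<not> P (conc w M u)" if "i \<le> M" "word_over AP u" for M u
  proof
    assume "P (conc w M u)"
    then have "P (conc w i (sfx i (conc w M u)))"
      by (simp add: conc_sfx_conc[OF that(1)])
    moreover have "word_over AP (sfx i (conc w M u))"
      by (intro word_over_sfx word_over_conc assms(2) that(2))
    ultimately show False
      using i by blast
  qed
  then show ?thesis
    unfolding eventually_sequentially by blast
qed

lemma safety_if_eventually_violated:
  assumes "\<And>w. word_over AP w \<Longrightarrow> \<not> P w \<Longrightarrow>
     \<forall>\<^sub>F i in sequentially. \<forall>u. word_over AP u \<longrightarrow> \<not> P (conc w i u)"
  shows "safety AP P"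
proof (rule safetyI, rule ccontr)
  fix w assume w: "word_over AP w" and "\<not> P w"
    and ext: "\<And>i. i > 0 \<Longrightarrow> \<exists>u. word_over AP u \<and> P (conc w i u)"
  from eventually_conj[OF eventually_gt_at_top[of 0] assms[OF w \<open>\<not> P w\<close>]]
  obtain N where "\<forall>i\<ge>N. 0 < i \<and> (\<forall>u. word_over AP u \<longrightarrow> \<not> P (conc w i u))"
    unfolding eventually_sequentially by blast
  then show False
    using ext[of N] by auto
qed

lemma safety_const: "safety AP (\<lambda>_. b)"
  unfolding safety_def using zero_less_one by blast

lemma safety_first_letter: "safety AP (\<lambda>w. R (w 0))"
proof (rule safetyI)
  fix w assume "\<And>i. i > 0 \<Longrightarrow> \<exists>u. word_over AP u \<and> R (conc w i u 0)"
  from this[of 1] obtain u where "R (conc w 1 u 0)"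
    by auto
  then show "R (w 0)"
    by (simp add: conc_def)
qed

lemma safety_conj:
  assumes "safety AP P" "safety AP Q"
  shows "safety AP (\<lambda>w. P w \<and> Q w)"
proof (rule safetyI, rule conjI)
  fix w assume w: "word_over AP w"
    and ext: "\<And>i. i > 0 \<Longrightarrow> \<exists>u. word_over AP u \<and> P (conc w i u) \<and> Q (conc w i u)"
  show "P w"
    by (rule safetyD[OF assms(1) w]) (use ext in blast)
  show "Q w"
    by (rule safetyD[OF assms(2) w]) (use ext in blast)
qed

lemma safety_all:
  assumes "\<And>x. safety AP (P x)"
  shows "safety AP (\<lambda>w. \<forall>x. P x w)"
proof (rule safetyI, rule allI)
  fix w x assume w: "word_over AP w"
    and ext: "\<And>i. i > 0 \<Longrightarrow> \<exists>u. word_over AP u \<and> (\<forall>x. P x (conc w i u))"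
  show "P x w"
    by (rule safetyD[OF assms w]) (use ext in blast)
qed

lemma safety_disj:
  assumes "safety AP P" "safety AP Q"
  shows "safety AP (\<lambda>w. P w \<or> Q w)"
proof (rule safety_if_eventually_violated)
  fix w assume w: "word_over AP w" and "\<not> (P w \<or> Q w)"
  then have "\<forall>\<^sub>F i in sequentially. (\<forall>u. word_over AP u \<longrightarrow> \<not> P (conc w i u))
      \<and> (\<forall>u. word_over AP u \<longrightarrow> \<not> Q (conc w i u))"
    by (intro eventually_conj safety_eventually_violated[OF assms(1) w]
        safety_eventually_violated[OF assms(2) w]) auto
  then show "\<forall>\<^sub>F i in sequentially. \<forall>u. word_over AP u \<longrightarrow> \<not> (P (conc w i u) \<or> Q (conc w i u))"
    by (rule eventually_mono) blast
qed

lemma safety_sfx: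
  assumes "safety AP P"
  shows "safety AP (\<lambda>w. P (sfx j w))"
proof (rule safetyI)
  fix w assume w: "word_over AP w"
    and ext: "\<And>i. i > 0 \<Longrightarrow> \<exists>u. word_over AP u \<and> P (sfx j (conc w i u))"
  have "\<exists>u. word_over AP u \<and> P (conc (sfx j w) i u)" if "i > 0" for i
    using ext[of "i + j"] that by (simp add: sfx_conc_add)
  then show "P (sfx j w)"
    using safetyD[OF assms word_over_sfx[OF w]] by blast
qed

definition weak_until ::
    "((nat \<Rightarrow> 'b) \<Rightarrow> bool) \<Rightarrow> ((nat \<Rightarrow> 'b) \<Rightarrow> bool) \<Rightarrow> (nat \<Rightarrow> 'b) \<Rightarrow> bool" where
  "weak_until P Q w \<longleftrightarrow> (\<forall>n. P (sfx n w)) \<or> (\<exists>i. Q (sfx i w) \<and> (\<forall>n<i. P (sfx n w)))"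

lemma safety_weak_until:
  assumes P: "safety AP P" and Q: "safety AP Q"
  shows "safety AP (weak_until P Q)"
proof (rule safety_if_eventually_violated)
  fix w assume w: "word_over AP w" and not_until: "\<not> weak_until P Q w"
  then obtain j where j: "\<not> P (sfx j w)" and before_j: "\<forall>n<j. P (sfx n w)"
    unfolding weak_until_def using exists_least_iff[of "\<lambda>j. \<not> P (sfx j w)"] by blast
  have "\<not> Q (sfx i w)" if "i \<le> j" for i
    using not_until before_j that unfolding weak_until_def by auto
  then have "\<forall>\<^sub>F M in sequentially. \<forall>i\<in>{..j}. \<forall>u. word_over AP u \<longrightarrow> \<not> Q (sfx i (conc w M u))"
    using safety_eventually_violated[OF safety_sfx[OF Q] w] by (intro eventually_ball_finite) auto
  moreover have "\<forall>\<^sub>F M in sequentially. \<forall>u. word_over AP u \<longrightarrow> \<not> P (sfx j (conc w M u))"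
    using safety_eventually_violated[OF safety_sfx[OF P] w j] .
  ultimately show "\<forall>\<^sub>F M in sequentially. \<forall>u. word_over AP u \<longrightarrow> \<not> weak_until P Q (conc w M u)"
    unfolding weak_until_def by eventually_elim (metis atMost_iff not_le)
qed

(* The axioms of idem_ordered_tgp that are used, in rule form; the distributivity of Val
   over finite sums is not among them. *)

locale tgp_valuation_monoid =
  fixes K :: "'k vmon"
  assumes vplus_assoc: "vplus K (vplus K a b) c = vplus K a (vplus K b c)"
    and vplus_commute: "vplus K a b = vplus K b a"
    and vplus_zero: "vplus K a (vzero K) = a"
    and vplus_idem: "vplus K a a = a"
    and vsum_singleton: "vsum K f {x} = f x"
    and vsum_pair: "x \<noteq> y \<Longrightarrow> vsum K f {x, y} = vplus K (f x) (f y)"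
    and vsum_cong: "(\<And>x. x \<in> A \<Longrightarrow> f x = g x) \<Longrightarrow> vsum K f A = vsum K g A"
    and vsum_partition: "(\<And>i j. i \<in> J \<Longrightarrow> j \<in> J \<Longrightarrow> i \<noteq> j \<Longrightarrow> P i \<inter> P j = {}) \<Longrightarrow>
      vsum K (\<lambda>j. vsum K f (P j)) J = vsum K f (\<Union>j\<in>J. P j)"
    and vsum_mult_one: "vsum K (\<lambda>_. vmult K c (vone K)) A = vmult K c (vsum K (\<lambda>_. vone K) A)"
    and vle_total: "vle K a b \<or> vle K b a"
    and vle_one: "vle K a (vone K)"
    and vmult_zero_left: "vmult K (vzero K) a = vzero K"
    and vmult_zero_right: "vmult K a (vzero K) = vzero K"
    and vmult_one_left: "vmult K (vone K) a = a"
    and vmult_one_right: "vmult K a (vone K) = a"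
    and vval_zero: "fin_valued s \<Longrightarrow> s i = vzero K \<Longrightarrow> vval K s = vzero K"
    and vval_one: "vval K (\<lambda>_. vone K) = vone K"
    and vle_vval: "fin_valued s \<Longrightarrow> (\<And>i. vle K a (s i)) \<Longrightarrow> vle K a (vval K s)"

lemma tgp_valuation_monoidI: "idem_ordered_tgp K \<Longrightarrow> tgp_valuation_monoid K"
  unfolding idem_ordered_tgp_def complete_monoid_def
  by (elim conjE, unfold_locales) meson+

lemma fin_valuedI: "finite A \<Longrightarrow> range s \<subseteq> A \<Longrightarrow> fin_valued s"
  unfolding fin_valued_def by (rule finite_subset)

abbreviation Lk_zero :: "'k vmon \<Rightarrow> 'k \<Rightarrow> 'k set" where
  "Lk_zero K k \<equiv> insert (vzero K) (Lk K k)"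

lemma k_safe_Const: "k_safe K AP k (sem K (Const c))"
  by (simp add: k_safe_iff_safety safety_const)

lemma k_safe_Next: "k_safe K AP k (sem K \<phi>) \<Longrightarrow> k_safe K AP k (sem K (Next \<phi>))"
  unfolding k_safe_iff_safety sem.simps by (rule safety_sfx)

context tgp_valuation_monoid
begin

lemma vle_trans: "vle K a b \<Longrightarrow> vle K b c \<Longrightarrow> vle K a c"
  unfolding vle_def by (metis vplus_assoc)

lemma vle_antisym: "vle K a b \<Longrightarrow> vle K b a \<Longrightarrow> a = b"
  unfolding vle_def by (metis vplus_commute)

lemma vle_plus: "vle K a (vplus K a b)"
  unfolding vle_def by (metis vplus_assoc vplus_commute vplus_idem)

lemma vle_zero_iff: "vle K a (vzero K) \<longleftrightarrow> a = vzero K"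
  unfolding vle_def by (metis vplus_commute vplus_zero)

lemma vle_plus_iff: "vle K c (vplus K a b) \<longleftrightarrow> vle K c a \<or> vle K c b"
proof
  assume "vle K c (vplus K a b)"
  moreover have "vplus K a b = b \<or> vplus K a b = a"
    using vle_total unfolding vle_def by (metis vplus_commute)
  ultimately show "vle K c a \<or> vle K c b"
    by auto
qed (metis vle_plus vle_trans vplus_commute)

lemma vplus_in_Lk_zero: "a \<in> Lk_zero K k \<Longrightarrow> b \<in> Lk_zero K k \<Longrightarrow> vplus K a b \<in> Lk_zero K k"
  using vle_plus_iff vplus_zero by (auto simp: Lk_def)

lemma k_safe_Or:
  "k_safe K AP k (sem K \<phi>) \<Longrightarrow> k_safe K AP k (sem K \<psi>) \<Longrightarrow> k_safe K AP k (sem K (Or \<phi> \<psi>))"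
  unfolding k_safe_iff_safety sem.simps vle_plus_iff by (rule safety_disj)

lemma vsum_zero:
  assumes "\<And>x. x \<in> A \<Longrightarrow> f x = vzero K"
  shows "vsum K f A = vzero K"
proof -
  have "vsum K f A = vsum K (\<lambda>_. vmult K (vzero K) (vone K)) A"
    by (rule vsum_cong) (simp add: assms vmult_zero_left)
  also have "\<dots> = vzero K"
    by (rule trans[OF vsum_mult_one vmult_zero_left])
  finally show ?thesis .
qed

lemma vle_vsum:
  assumes "x \<in> A"
  shows "vle K (f x) (vsum K f A)"
proof -
  define a b :: idx where "a = (\<lambda>_. 0)" and "b = (\<lambda>_. 1)"
  then have "a \<noteq> b"
    by (metis zero_neq_one)
  define P where "P = (\<lambda>j. if j = a then {x} else A - {x})"
  have "vsum K f A = vsum K f (\<Union>j\<in>{a, b}. P j)"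
    using assms \<open>a \<noteq> b\<close> by (auto simp: P_def intro: arg_cong[where f = "vsum K f"])
  also have "\<dots> = vsum K (\<lambda>j. vsum K f (P j)) {a, b}"
    by (rule sym, rule vsum_partition) (auto simp: P_def)
  also have "\<dots> = vplus K (f x) (vsum K f (A - {x}))"
    using \<open>a \<noteq> b\<close> by (simp add: vsum_pair vsum_singleton P_def)
  finally show ?thesis
    by (simp add: vle_plus)
qed

lemma nsum_zero: "(\<And>i. i \<in> A \<Longrightarrow> f i = vzero K) \<Longrightarrow> nsum K f A = vzero K"
  unfolding nsum_def by (rule vsum_zero) auto

lemma vle_nsum: "i \<in> A \<Longrightarrow> vle K (f i) (nsum K f A)"
  unfolding nsum_def using vle_vsum[of "\<lambda>_. i" _ "\<lambda>x. f (x 0)"] by simp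

lemma boolean_subset_Lk_zero: "{vzero K, vone K} \<subseteq> Lk_zero K k"
  by (simp add: Lk_def vle_one)

lemma vplus_boolean:
  "a \<in> {vzero K, vone K} \<Longrightarrow> b \<in> {vzero K, vone K} \<Longrightarrow> vplus K a b \<in> {vzero K, vone K}"
  using vplus_zero vplus_commute vplus_idem by auto

lemma vmult_boolean:
  assumes "a \<in> {vzero K, vone K}"
  shows "vmult K a b = (if a = vone K then b else vzero K)"
    and "vmult K b a = (if a = vone K then b else vzero K)"
  using assms by (auto simp: vmult_zero_left vmult_zero_right vmult_one_left vmult_one_right)

lemma vval_boolean:
  assumes "range s \<subseteq> {vzero K, vone K}"
  shows "vval K s \<in> {vzero K, vone K}"
proof (cases "\<exists>i. s i = vzero K")
  case True
  then show ?thesis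
    using vval_zero[OF fin_valuedI[OF _ assms]] by blast
next
  case False
  then have "s = (\<lambda>_. vone K)"
    using assms by (auto simp: fun_eq_iff image_subset_iff)
  then show ?thesis
    by (simp add: vval_one)
qed

lemma nsum_boolean:
  assumes "\<And>i. i \<in> A \<Longrightarrow> f i \<in> {vzero K, vone K}"
  shows "nsum K f A \<in> {vzero K, vone K}"
  using assms nsum_zero vle_nsum vle_one vle_antisym by (metis insert_iff singletonD)

lemma sem_sbLTL_boolean: "\<phi> \<in> sbLTL K AP \<Longrightarrow> sem K \<phi> w \<in> {vzero K, vone K}"
proof (induction arbitrary: w rule: sbLTL.induct)
  case (sb_or \<phi> \<psi>)
  then show ?case
    unfolding sem.simps by (intro vplus_boolean)
next
  case (sb_and \<phi> \<psi>)
  then show ?case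
    unfolding sem.simps vmult_boolean(1)[OF sb_and.IH(1)] by simp
next
  case (sb_rU \<phi> \<psi>)
  show ?case
    unfolding rU_def sem.simps
    by (intro vplus_boolean vval_boolean nsum_boolean) (use sb_rU.IH in auto)
next
  case (sb_box \<phi>)
  show ?case
    unfolding sem.simps by (intro vval_boolean) (use sb_box.IH in auto)
qed (simp_all add: ltrue_def)

lemma vval_in_Lk_zero:
  assumes "fin_valued s" "range s \<subseteq> Lk_zero K k"
  shows "vval K s \<in> Lk_zero K k"
  using assms vle_vval[OF assms(1)] vval_zero unfolding Lk_def by blast

context
  fixes k :: 'k
  assumes k_nonzero: "k \<noteq> vzero K"
begin

lemma vle_boolean_iff: "a \<in> {vzero K, vone K} \<Longrightarrow> vle K k a \<longleftrightarrow> a = vone K"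
  using k_nonzero vle_zero_iff vle_one by auto

lemma vle_vval_iff:
  assumes "fin_valued s" "range s \<subseteq> Lk_zero K k"
  shows "vle K k (vval K s) \<longleftrightarrow> (\<forall>i. vle K k (s i))"
proof
  assume "vle K k (vval K s)"
  then have "vval K s \<noteq> vzero K"
    by (metis k_nonzero vle_zero_iff)
  then show "\<forall>i. vle K k (s i)"
    using assms vval_zero unfolding Lk_def by blast
qed (rule vle_vval[OF assms(1)], blast)

lemma vle_nsum_iff:
  assumes "\<And>i. i \<in> A \<Longrightarrow> f i \<in> Lk_zero K k"
  shows "vle K k (nsum K f A) \<longleftrightarrow> (\<exists>i\<in>A. vle K k (f i))"
proof
  assume "vle K k (nsum K f A)"
  then have "nsum K f A \<noteq> vzero K"
    by (metis k_nonzero vle_zero_iff)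
  then show "\<exists>i\<in>A. vle K k (f i)"
    using assms nsum_zero unfolding Lk_def by blast
qed (use vle_nsum vle_trans in blast)

lemma vle_sem_Box_iff:
  assumes "finite (range (sem K \<phi>))" "range (sem K \<phi>) \<subseteq> Lk_zero K k"
  shows "vle K k (sem K (Box \<phi>) w) \<longleftrightarrow> (\<forall>i. vle K k (sem K \<phi> (sfx i w)))"
proof -
  have "fin_valued (\<lambda>i. sem K \<phi> (sfx i w))"
    by (rule fin_valuedI[OF assms(1)]) auto
  then show ?thesis
    using vle_vval_iff assms(2) by auto
qed

lemma vle_sem_Until_iff:
  assumes "finite (range (sem K \<phi>))" "range (sem K \<phi>) \<subseteq> Lk_zero K k"
    and "finite (range (sem K \<psi>))" "range (sem K \<psi>) \<subseteq> Lk_zero K k"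
  shows "vle K k (sem K (Until \<phi> \<psi>) w) \<longleftrightarrow>
    (\<exists>i. vle K k (sem K \<psi> (sfx i w)) \<and> (\<forall>n<i. vle K k (sem K \<phi> (sfx n w))))"
proof -
  define s where "s = (\<lambda>i n. if n < i then sem K \<phi> (sfx n w)
    else if n = i then sem K \<psi> (sfx i w) else vone K)"
  have "range (s i) \<subseteq> range (sem K \<phi>) \<union> range (sem K \<psi>) \<union> {vone K}" for i
    by (auto simp: s_def)
  then have "fin_valued (s i)" for i
    by (rule fin_valuedI[rotated]) (simp add: assms(1,3))
  moreover have "range (s i) \<subseteq> Lk_zero K k" for i
    using assms(2,4) boolean_subset_Lk_zero by (auto simp: s_def)
  ultimately have "vval K (s i) \<in> Lk_zero K k"
    and "vle K k (vval K (s i)) \<longleftrightarrow>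
      vle K k (sem K \<psi> (sfx i w)) \<and> (\<forall>n<i. vle K k (sem K \<phi> (sfx n w)))" for i
    using vval_in_Lk_zero vle_vval_iff vle_one by (auto simp: s_def split: if_splits)
  moreover have "sem K (Until \<phi> \<psi>) w = nsum K (\<lambda>i. vval K (s i)) UNIV"
    by (simp add: s_def)
  ultimately show ?thesis
    using vle_nsum_iff[of UNIV "\<lambda>i. vval K (s i)"] by auto
qed

lemma k_safe_Atom: "k_safe K AP k (sem K (Atom a))"
proof -
  have "vle K k (sem K (Atom a) w) \<longleftrightarrow> a \<in> w 0" for w
    using k_nonzero vle_zero_iff vle_one by auto
  then show ?thesis
    unfolding k_safe_iff_safety using safety_first_letter[of AP "\<lambda>x. a \<in> x"] by simp
qed

lemma k_safe_NAtom: "k_safe K AP k (sem K (NAtom a))"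
proof -
  have "vle K k (sem K (NAtom a) w) \<longleftrightarrow> a \<notin> w 0" for w
    using k_nonzero vle_zero_iff vle_one by auto
  then show ?thesis
    unfolding k_safe_iff_safety using safety_first_letter[of AP "\<lambda>x. a \<notin> x"] by simp
qed

lemma k_safe_And:
  assumes "\<And>w. sem K \<phi> w \<in> {vzero K, vone K}"
    and "k_safe K AP k (sem K \<phi>)" "k_safe K AP k (sem K \<psi>)"
  shows "k_safe K AP k (sem K (And \<phi> \<psi>))" and "k_safe K AP k (sem K (And \<psi> \<phi>))"
proof -
  have "vle K k (sem K (And \<phi> \<psi>) w) \<longleftrightarrow> vle K k (sem K \<phi> w) \<and> vle K k (sem K \<psi> w)"
    and "vle K k (sem K (And \<psi> \<phi>) w) \<longleftrightarrow> vle K k (sem K \<phi> w) \<and> vle K k (sem K \<psi> w)" for w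
    using vmult_boolean[OF assms(1)] vle_boolean_iff[OF assms(1)] k_nonzero vle_zero_iff by auto
  with assms(2,3) show "k_safe K AP k (sem K (And \<phi> \<psi>))" "k_safe K AP k (sem K (And \<psi> \<phi>))"
    unfolding k_safe_iff_safety by (simp_all add: safety_conj)
qed

lemma k_safe_Box:
  assumes "finite (range (sem K \<phi>))" "range (sem K \<phi>) \<subseteq> Lk_zero K k"
    and "k_safe K AP k (sem K \<phi>)"
  shows "k_safe K AP k (sem K (Box \<phi>))"
  using assms(3) unfolding k_safe_iff_safety vle_sem_Box_iff[OF assms(1,2)]
  by (intro safety_all safety_sfx)

lemma k_safe_rU:
  assumes "finite (range (sem K \<phi>))" "range (sem K \<phi>) \<subseteq> Lk_zero K k"
    and "finite (range (sem K \<psi>))" "range (sem K \<psi>) \<subseteq> Lk_zero K k"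
    and "k_safe K AP k (sem K \<phi>)" "k_safe K AP k (sem K \<psi>)"
  shows "k_safe K AP k (sem K (rU \<phi> \<psi>))"
proof -
  have "vle K k (sem K (rU \<phi> \<psi>) w) \<longleftrightarrow>
      weak_until (\<lambda>w. vle K k (sem K \<phi> w)) (\<lambda>w. vle K k (sem K \<psi> w)) w" for w
    by (simp only: rU_def sem.simps(4) vle_plus_iff weak_until_def
        vle_sem_Box_iff[OF assms(1,2)] vle_sem_Until_iff[OF assms(1-4)])
  with assms(5,6) show ?thesis
    unfolding k_safe_iff_safety by (simp add: safety_weak_until)
qed

lemma sbLTL_range:
  assumes "\<phi> \<in> sbLTL K AP"
  shows "finite (range (sem K \<phi>))" and "range (sem K \<phi>) \<subseteq> Lk_zero K k"
proof -
  have "range (sem K \<phi>) \<subseteq> {vzero K, vone K}"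
    using sem_sbLTL_boolean[OF assms] by blast
  then show "finite (range (sem K \<phi>))" "range (sem K \<phi>) \<subseteq> Lk_zero K k"
    using boolean_subset_Lk_zero finite_subset by blast+
qed

lemma stLTL_range:
  assumes "\<phi> \<in> stLTL K AP k"
  shows "finite (range (sem K \<phi>)) \<and> range (sem K \<phi>) \<subseteq> Lk_zero K k"
  using assms
proof (induction rule: stLTL.induct)
  case (st_base c \<phi>)
  have "range (sem K (And (Const c) \<phi>)) \<subseteq> {vzero K, c}"
    using vmult_boolean(2)[OF sem_sbLTL_boolean[OF st_base(2)]] by auto
  then show ?case
    using st_base(1) finite_subset by (auto simp: Lk_def)
next
  case (st_or \<phi> \<psi>)
  have "range (sem K (Or \<phi> \<psi>)) \<subseteq> (\<lambda>(a, b). vplus K a b) ` (range (sem K \<phi>) \<times> range (sem K \<psi>))"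
    by auto
  moreover have "finite ((\<lambda>(a, b). vplus K a b) ` (range (sem K \<phi>) \<times> range (sem K \<psi>)))"
    using st_or.IH by simp
  moreover have "sem K (Or \<phi> \<psi>) w \<in> Lk_zero K k" for w
    unfolding sem.simps
    by (rule vplus_in_Lk_zero) (use st_or.IH in \<open>simp_all add: image_subset_iff\<close>)
  ultimately show ?case
    using finite_subset by (metis image_subset_iff rangeE)
qed

lemma k_safe_sbLTL: "\<phi> \<in> sbLTL K AP \<Longrightarrow> k_safe K AP k (sem K \<phi>)"
proof (induction rule: sbLTL.induct)
  case sb_true
  show ?case
    unfolding ltrue_def by (rule k_safe_Const)
next
  case (sb_and \<phi> \<psi>)
  then show ?case
    by (intro k_safe_And(1) sem_sbLTL_boolean)
next
  case (sb_rU \<phi> \<psi>)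
  then show ?case
    using k_safe_rU sbLTL_range by blast
next
  case (sb_box \<phi>)
  then show ?case
    using k_safe_Box sbLTL_range by blast
qed (rule k_safe_Atom k_safe_NAtom k_safe_Or k_safe_Next; assumption)+

lemma k_safe_stLTL: "\<phi> \<in> stLTL K AP k \<Longrightarrow> k_safe K AP k (sem K \<phi>)"
proof (induction rule: stLTL.induct)
  case (st_base c \<phi>)
  then show ?case
    by (intro k_safe_And(2) sem_sbLTL_boolean k_safe_sbLTL k_safe_Const)
next
  case (st_or \<phi> \<psi>)
  from st_or.IH show ?case
    by (rule k_safe_Or)
qed

lemma k_safe_rU_stLTL:
  "\<phi> \<in> stLTL K AP k \<Longrightarrow> \<psi> \<in> stLTL K AP k \<Longrightarrow> k_safe K AP k (sem K (rU \<phi> \<psi>))"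
  using k_safe_rU stLTL_range k_safe_stLTL by blast

lemma k_safe_Box_stLTL: "\<phi> \<in> stLTL K AP k \<Longrightarrow> k_safe K AP k (sem K (Box \<phi>))"
  using k_safe_Box stLTL_range k_safe_stLTL by blast

lemma k_safe_tRULTL: "\<phi> \<in> tRULTL K AP k \<Longrightarrow> k_safe K AP k (sem K \<phi>)"
proof (induction rule: tRULTL.induct)
  case (t_and1 \<phi> \<psi>)
  then have "k_safe K AP k (sem K \<psi>)"
    using k_safe_stLTL k_safe_rU_stLTL k_safe_Box_stLTL by blast
  then show ?case
    using k_safe_And(1) sem_sbLTL_boolean k_safe_sbLTL t_and1.hyps(1) by metis
next
  case (t_and2 \<phi> \<psi>)
  then have "k_safe K AP k (sem K \<psi>)"
    using k_safe_stLTL k_safe_rU_stLTL k_safe_Box_stLTL by blast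
  then show ?case
    using k_safe_And(2) sem_sbLTL_boolean k_safe_sbLTL t_and2.hyps(1) by metis
qed (rule k_safe_Const k_safe_sbLTL k_safe_stLTL k_safe_Next k_safe_Or
    k_safe_rU_stLTL k_safe_Box_stLTL; assumption)+

end

end

theorem theorem6:
  fixes K :: "'k vmon" and AP :: "'a set" and k :: 'k and \<phi> :: "('k, 'a) ltl"
  assumes "idem_ordered_tgp K"
    and "finite AP"
    and "k \<noteq> vzero K" and "k \<noteq> vone K"
    and "\<phi> \<in> tRULTL K AP k"
  shows "k_safe K AP k (sem K \<phi>)"
proof -
  interpret tgp_valuation_monoid K
    using assms(1) by (rule tgp_valuation_monoidI)
  show ?thesis
    using k_safe_tRULTL[OF assms(3,5)] .
qed

end
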